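(* Let $q$ be a prime power, let $F_1\subsetneq F_0\subseteq\mathbb{F}_q^n$ be linear codes, and let $G_E\in\mathbb{F}_q^{e\times n}$ have row space $E$ with $F_0\cap E=\{\underline{0}\}$. In the QSS scheme given by $\mathrm{ECSS}(F_0,F_1,G_E)$, when the combiner has prior access to all $e$ extension qudits, the secret can be recovered from every choice of $\tau$ qudits out of the $n$ original qudits (i.e. $J\cup\{n+1,\dots,n+e\}$ is authorized for every $J\subseteq[n]$ with $|J|=\tau$) if and only if $\tau\geq\tau_e$, where $$\tau_e=n-\min\{\mathrm{wt}(F_0\setminus F_1),\ \mathrm{wt}((F_1+E)^\perp\setminus(F_0+E)^\perp)\}+1.$$
   Context: For linear codes $L_1\subsetneq L_0\subseteq\mathbb{F}_q^n$, $\mathrm{wt}(L_0\setminus L_1)=\min\{\mathrm{wt}(\underline{c}):\underline{c}\in L_0,\ \underline{c}\notin L_1\}$ (Hamming weight); $L^\perp$ is the dual code. Let $F_0,F_1$ have dimensions $f_0,f_1$, and let $G_{F_0}=\begin{bmatrix}G_{F_0/F_1}\\ G_{F_1}\end{bmatrix}$ be a generator matrix of $F_0$ with $G_{F_1}$ generating $F_1$ and $G_{F_0/F_1}$ generating a complement of $F_1$ in $F_0$. The extended CSS code $\mathrm{ECSS}(F_0,F_1,G_E)$ is the CSS code of $C_0$ over $C_1$ where $C_0,C_1\subseteq\mathbb{F}_q^{n+e}$ are generated by $\begin{bmatrix}G_{F_0}&0\\ G_E&I_e\end{bmatrix}$ and $\begin{bmatrix}G_{F_1}&0\\ G_E&I_e\end{bmatrix}$;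 its encoding maps (up to normalization, extended linearly) $|\underline{s}\rangle$, $\underline{s}\in\mathbb{F}_q^{f_0-f_1}$, to $\sum_{\underline{r}_1\in\mathbb{F}_q^{f_1},\underline{r}_2\in\mathbb{F}_q^{e}}|[\,G_{F_0/F_1}^T\ G_{F_1}^T\ G_E^T\,](\underline{s};\underline{r}_1;\underline{r}_2)\rangle|\underline{r}_2\rangle$. The first $n$ qudits are the original qudits and the last $e$ the extension qudits; qudit $j$ is given to party $j\in[n+e]$. A set of parties is authorized if the secret can be recovered from their qudits. *)

theory Defs
  imports Complex_Main
begin

text \<open>Vectors over the finite field 'a are functions nat => 'a; the vectors of F_q^n are
  those supported in {..<n} (coordinate j of the paper is index j-1 here).
  More generally vecs A is the set of functions supported in the index set A; it also serves
  as the computational basis of the qudits indexed by A.\<close>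

definition vecs :: "nat set \<Rightarrow> (nat \<Rightarrow> 'a::zero) set" where
  "vecs A = {v. \<forall>i. i \<notin> A \<longrightarrow> v i = 0}"

definition zerov :: "nat \<Rightarrow> 'a::zero" where
  "zerov = (\<lambda>_. 0)"

definition vadd :: "(nat \<Rightarrow> 'a::plus) \<Rightarrow> (nat \<Rightarrow> 'a) \<Rightarrow> (nat \<Rightarrow> 'a)" where
  "vadd u v = (\<lambda>i. u i + v i)"

definition linear_code :: "nat \<Rightarrow> (nat \<Rightarrow> 'a::field) set \<Rightarrow> bool" where
  "linear_code n L \<longleftrightarrow> L \<subseteq> vecs {..<n} \<and> zerov \<in> L \<and>
     (\<forall>u\<in>L. \<forall>v\<in>L. vadd u v \<in> L) \<and> (\<forall>c. \<forall>v\<in>L. (\<lambda>i. c * v i) \<in> L)"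

text \<open>A matrix is a list of rows; lincomb G c = c^T G (row vector c times G).\<close>

definition lincomb :: "(nat \<Rightarrow> 'a::field) list \<Rightarrow> (nat \<Rightarrow> 'a) \<Rightarrow> (nat \<Rightarrow> 'a)" where
  "lincomb G c = (\<lambda>j. \<Sum>i<length G. c i * (G ! i) j)"

definition row_space :: "(nat \<Rightarrow> 'a::field) list \<Rightarrow> (nat \<Rightarrow> 'a) set" where
  "row_space G = lincomb G ` vecs {..<length G}"

definition rows_indep :: "(nat \<Rightarrow> 'a::field) list \<Rightarrow> bool" where
  "rows_indep G \<longleftrightarrow> (\<forall>c \<in> vecs {..<length G}. lincomb G c = zerov \<longrightarrow> c = zerov)"

definition generator_matrix :: "(nat \<Rightarrow> 'a::field) list \<Rightarrow> (nat \<Rightarrow> 'a) set \<Rightarrow> bool" where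
  "generator_matrix G L \<longleftrightarrow> rows_indep G \<and> row_space G = L"

definition code_sum :: "(nat \<Rightarrow> 'a::plus) set \<Rightarrow> (nat \<Rightarrow> 'a) set \<Rightarrow> (nat \<Rightarrow> 'a) set" where
  "code_sum L M = {vadd u v | u v. u \<in> L \<and> v \<in> M}"

definition dual :: "nat \<Rightarrow> (nat \<Rightarrow> 'a::field) set \<Rightarrow> (nat \<Rightarrow> 'a) set" where
  "dual n L = {v \<in> vecs {..<n}. \<forall>c\<in>L. (\<Sum>i<n. v i * c i) = 0}"

definition hwt :: "nat \<Rightarrow> (nat \<Rightarrow> 'a::zero) \<Rightarrow> nat" where
  "hwt n v = card {i. i < n \<and> v i \<noteq> 0}"

definition wt_diff :: "nat \<Rightarrow> (nat \<Rightarrow> 'a::zero) set \<Rightarrow> (nat \<Rightarrow> 'a) set \<Rightarrow> nat" where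
  "wt_diff n L0 L1 = Min (hwt n ` (L0 - L1))"

definition tau_e :: "nat \<Rightarrow> (nat \<Rightarrow> 'a::field) set \<Rightarrow> (nat \<Rightarrow> 'a) set \<Rightarrow> (nat \<Rightarrow> 'a) set \<Rightarrow> nat" where
  "tau_e n F0 F1 E = n + 1 - min (wt_diff n F0 F1)
       (wt_diff n (dual n (code_sum F1 E)) (dual n (code_sum F0 E)))"

text \<open>Qudits are indexed 0..<n (original) and n..<n+e (extension).\<close>

definition ecss_word :: "nat \<Rightarrow> (nat \<Rightarrow> 'a::field) list \<Rightarrow> (nat \<Rightarrow> 'a) list \<Rightarrow> (nat \<Rightarrow> 'a) list
    \<Rightarrow> (nat \<Rightarrow> 'a) \<Rightarrow> (nat \<Rightarrow> 'a) \<Rightarrow> (nat \<Rightarrow> 'a) \<Rightarrow> (nat \<Rightarrow> 'a)" where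
  "ecss_word n G01 G1 GE s r1 r2 = (\<lambda>i.
      if i < n then lincomb G01 s i + lincomb G1 r1 i + lincomb GE r2 i
      else if i < n + length GE then r2 (i - n) else 0)"

text \<open>Amplitude of basis state x in the (normalized) encoding of basis secret |s>.\<close>
definition ecss_amp :: "nat \<Rightarrow> (nat \<Rightarrow> 'a::{finite,field}) list \<Rightarrow> (nat \<Rightarrow> 'a) list \<Rightarrow> (nat \<Rightarrow> 'a) list
    \<Rightarrow> (nat \<Rightarrow> 'a) \<Rightarrow> (nat \<Rightarrow> 'a) \<Rightarrow> complex" where
  "ecss_amp n G01 G1 GE s x =
     of_nat (card {(r1, r2). r1 \<in> vecs {..<length G1} \<and> r2 \<in> vecs {..<length GE} \<and>
                             ecss_word n G01 G1 GE s r1 r2 = x})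
     / of_real (sqrt (real (card (UNIV :: 'a set) ^ (length G1 + length GE))))"

definition ecss_encode :: "nat \<Rightarrow> (nat \<Rightarrow> 'a::{finite,field}) list \<Rightarrow> (nat \<Rightarrow> 'a) list \<Rightarrow> (nat \<Rightarrow> 'a) list
    \<Rightarrow> ((nat \<Rightarrow> 'a) \<Rightarrow> complex) \<Rightarrow> (nat \<Rightarrow> 'a) \<Rightarrow> complex" where
  "ecss_encode n G01 G1 GE psi x =
     (\<Sum>s\<in>vecs {..<length G01}. psi s * ecss_amp n G01 G1 GE s x)"

text \<open>Reduced density matrix on the qudits in A of the pure state Phi of N qudits
  (partial trace over {..<N} - A); entries indexed by x, y in vecs A.\<close>
definition reduced_state :: "nat \<Rightarrow> nat set \<Rightarrow> ((nat \<Rightarrow> 'a::{finite,zero,plus}) \<Rightarrow> complex)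
    \<Rightarrow> (nat \<Rightarrow> 'a) \<Rightarrow> (nat \<Rightarrow> 'a) \<Rightarrow> complex" where
  "reduced_state N A Phi x y =
     (\<Sum>z\<in>vecs ({..<N} - A). Phi (vadd x z) * cnj (Phi (vadd y z)))"

text \<open>Quantum channel from the qudits in A to the secret system with basis B, given by a
  finite list of Kraus operators K(s, x) (s in B, x in vecs A); trace preserving condition.\<close>
definition kraus_tp :: "nat set \<Rightarrow> (nat \<Rightarrow> 'a::{finite,zero}) set
    \<Rightarrow> ((nat \<Rightarrow> 'a) \<Rightarrow> (nat \<Rightarrow> 'a) \<Rightarrow> complex) list \<Rightarrow> bool" where
  "kraus_tp A B Ks \<longleftrightarrow> (\<forall>x\<in>vecs A. \<forall>y\<in>vecs A.
      (\<Sum>j<length Ks. \<Sum>s\<in>B. cnj ((Ks ! j) s x) * (Ks ! j) s y) = (if x = y then 1 else 0))"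

definition kraus_apply :: "nat set \<Rightarrow> ((nat \<Rightarrow> 'a::{finite,zero}) \<Rightarrow> (nat \<Rightarrow> 'a) \<Rightarrow> complex) list
    \<Rightarrow> ((nat \<Rightarrow> 'a) \<Rightarrow> (nat \<Rightarrow> 'a) \<Rightarrow> complex) \<Rightarrow> (nat \<Rightarrow> 'a) \<Rightarrow> (nat \<Rightarrow> 'a) \<Rightarrow> complex" where
  "kraus_apply A Ks X s t =
     (\<Sum>j<length Ks. \<Sum>x\<in>vecs A. \<Sum>y\<in>vecs A. (Ks ! j) s x * X x y * cnj ((Ks ! j) t y))"

definition ecss_authorized :: "nat \<Rightarrow> (nat \<Rightarrow> 'a::{finite,field}) list \<Rightarrow> (nat \<Rightarrow> 'a) list
    \<Rightarrow> (nat \<Rightarrow> 'a) list \<Rightarrow> nat set \<Rightarrow> bool" where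
  "ecss_authorized n G01 G1 GE A \<longleftrightarrow>
     (\<exists>Ks. kraus_tp A (vecs {..<length G01}) Ks \<and>
        (\<forall>psi. (\<Sum>s\<in>vecs {..<length G01}. (cmod (psi s))\<^sup>2) = 1 \<longrightarrow>
           (\<forall>s\<in>vecs {..<length G01}. \<forall>t\<in>vecs {..<length G01}.
              kraus_apply A Ks (reduced_state (n + length GE) A (ecss_encode n G01 G1 GE psi)) s t
                = psi s * cnj (psi t))))"

end

(* Let A = J \<union> {extension qudits} and B = [n] - J. The basis state |s> is encoded into the
   uniform superposition over the coset s G_{F0/F1} + C1, where C1 is generated by
   [G_F1 0; G_E I]. The shares A recover the secret iff (X) the A-parts of different cosets are
   disjoint and (Z) every coset has a representative vanishing on B.
   A word of F0 - F1 vanishing on J breaks (X): the secrets 0 and s then leave the same reduced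
   state on A. A word of (F1+E)^perp - (F0+E)^perp vanishing on J breaks (Z): the states
   |0> + |s> and |0> - |s> then leave the same reduced state on A. Conversely, (X) is immediate
   when no word of the first kind vanishes on J, and (Z) follows from the absence of words of
   the second kind by separating a vector from a subspace with a linear functional; the
   secret is then read off by a classical relabelling of the basis of A. Hence every J of
   size tau is authorized iff every such word has weight above n - tau, i.e. tau >= tau_e. *)

theory Submission
  imports Defs "HOL-Library.Function_Algebras" "HOL-Library.FuncSet"
begin

section \<open>Coordinate vectors\<close>

lemma vadd_eq [simp]: "vadd u v = u + v"
  by (simp add: vadd_def fun_eq_iff)

lemma zerov_eq [simp]: "zerov = 0"
  by (simp add: zerov_def fun_eq_iff)

lemma zero_in_vecs [simp]: "0 \<in> vecs A"
  by (simp add: vecs_def)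

lemma add_in_vecs: "u \<in> vecs A \<Longrightarrow> v \<in> vecs A \<Longrightarrow> (u :: nat \<Rightarrow> 'a::monoid_add) + v \<in> vecs A"
  by (simp add: vecs_def)

lemma diff_in_vecs: "u \<in> vecs A \<Longrightarrow> v \<in> vecs A \<Longrightarrow> (u :: nat \<Rightarrow> 'a::group_add) - v \<in> vecs A"
  by (simp add: vecs_def)

lemma vecs_mono: "A \<subseteq> B \<Longrightarrow> vecs A \<subseteq> vecs B"
  by (auto simp: vecs_def)

lemma bij_betw_vecs_PiE:
  "bij_betw (\<lambda>v. restrict v A) (vecs A :: (nat \<Rightarrow> 'a::zero) set) (A \<rightarrow>\<^sub>E UNIV)"
proof (rule bij_betw_imageI)
  show "inj_on (\<lambda>v. restrict v A) (vecs A :: (nat \<Rightarrow> 'a) set)"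
  proof (rule inj_onI)
    fix u v :: "nat \<Rightarrow> 'a" assume "u \<in> vecs A" "v \<in> vecs A" and eq: "restrict u A = restrict v A"
    show "u = v"
    proof (rule ext)
      fix i show "u i = v i"
        using fun_cong[OF eq, of i] \<open>u \<in> vecs A\<close> \<open>v \<in> vecs A\<close>
        by (cases "i \<in> A") (auto simp: vecs_def)
    qed
  qed
  show "(\<lambda>v. restrict v A) ` (vecs A :: (nat \<Rightarrow> 'a) set) = A \<rightarrow>\<^sub>E UNIV"
  proof (intro equalityI subsetI)
    fix g :: "nat \<Rightarrow> 'a" assume "g \<in> A \<rightarrow>\<^sub>E UNIV"
    then have "g = restrict (\<lambda>i. if i \<in> A then g i else 0) A"
      by (auto simp: fun_eq_iff PiE_def extensional_def)
    moreover have "(\<lambda>i. if i \<in> A then g i else 0) \<in> vecs A"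
      by (simp add: vecs_def)
    ultimately show "g \<in> (\<lambda>v. restrict v A) ` vecs A" by blast
  qed auto
qed

lemma finite_vecs:
  assumes "finite A"
  shows "finite (vecs A :: (nat \<Rightarrow> 'a::{finite,zero}) set)"
proof -
  have "finite (A \<rightarrow>\<^sub>E (UNIV :: 'a set))"
    using assms by (simp add: finite_PiE)
  then show ?thesis
    using bij_betw_finite[OF bij_betw_vecs_PiE[of A, where 'a = 'a]] by blast
qed

lemma card_vecs:
  "finite A \<Longrightarrow> card (vecs A :: (nat \<Rightarrow> 'a::{finite,zero}) set) = card (UNIV :: 'a set) ^ card A"
  using bij_betw_same_card[OF bij_betw_vecs_PiE[of A]] by (simp add: card_PiE)

definition proj :: "nat set \<Rightarrow> (nat \<Rightarrow> 'b::zero) \<Rightarrow> nat \<Rightarrow> 'b" where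
  "proj A w = (\<lambda>i. if i \<in> A then w i else 0)"

lemma proj_in_vecs: "proj A w \<in> vecs A"
  by (simp add: proj_def vecs_def)

lemma proj_id: "v \<in> vecs A \<Longrightarrow> proj A v = v"
  by (simp add: proj_def fun_eq_iff vecs_def)

lemma proj_add: "proj A (u + v) = proj A u + proj A (v :: nat \<Rightarrow> 'b::monoid_add)"
  by (simp add: proj_def fun_eq_iff)

lemma proj_disjoint: "v \<in> vecs B \<Longrightarrow> A \<inter> B = {} \<Longrightarrow> proj A v = 0"
  by (auto simp: proj_def fun_eq_iff vecs_def)

lemma proj_add_proj:
  "w \<in> vecs (A \<union> B) \<Longrightarrow> A \<inter> B = {} \<Longrightarrow> proj A w + proj B w = (w :: nat \<Rightarrow> 'a::monoid_add)"
  by (auto simp: proj_def vecs_def fun_eq_iff)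

lemma proj_proj_disjoint: "A \<inter> B = {} \<Longrightarrow> proj A (proj B v) = 0"
  by (auto simp: proj_def fun_eq_iff)

lemma sum_card_fibres_proj:
  fixes C :: "(nat \<Rightarrow> 'a::{finite,monoid_add}) set"
  assumes "finite C" "finite B" "C \<subseteq> vecs (A \<union> B)" "A \<inter> B = {}"
  shows "(\<Sum>j\<in>proj A ` C. card {z \<in> vecs B. j + z \<in> C}) = card C"
proof -
  let ?S = "SIGMA j:proj A ` C. {z \<in> vecs B. j + z \<in> C}"
  have BA: "B \<inter> A = {}"
    using assms(4) by blast
  have decomp: "proj A w + proj B w = w" if "w \<in> C" for w
    using assms(3,4) that proj_add_proj by blast
  have "bij_betw (\<lambda>(j, z). j + z) ?S C"
  proof (rule bij_betw_byWitness[where f' = "\<lambda>w. (proj A w, proj B w)"])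
    show "\<forall>p\<in>?S. (proj A ((\<lambda>(j, z). j + z) p), proj B ((\<lambda>(j, z). j + z) p)) = p"
      using assms(4) BA
      by (auto simp: proj_add proj_id proj_disjoint proj_proj_disjoint proj_in_vecs)
    show "\<forall>w\<in>C. (\<lambda>(j, z). j + z) (proj A w, proj B w) = w"
      using decomp by auto
    show "(\<lambda>(j, z). j + z) ` ?S \<subseteq> C"
      by auto
    show "(\<lambda>w. (proj A w, proj B w)) ` C \<subseteq> ?S"
      using decomp by (auto simp: proj_in_vecs)
  qed
  then have "card C = card ?S"
    by (rule bij_betw_same_card[symmetric])
  also have "\<dots> = (\<Sum>j\<in>proj A ` C. card {z \<in> vecs B. j + z \<in> C})"
    using assms(1,2) by (intro card_SigmaI) (auto simp: finite_vecs)
  finally show ?thesis ..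
qed

section \<open>Linear algebra over the coefficient field\<close>

global_interpretation vec: vector_space "\<lambda>(c :: 'a::field) (v :: nat \<Rightarrow> 'a) i. c * v i"
  by unfold_locales (simp_all add: fun_eq_iff algebra_simps)

text \<open>The instance a * (b * x i) = (a * b) * x i of scale_scale loops with mult.assoc.\<close>
declare vec.scale_scale [simp del]

lemma linear_code_iff_subspace: "linear_code n L \<longleftrightarrow> L \<subseteq> vecs {..<n} \<and> vec.subspace L"
  by (auto simp: linear_code_def vec.subspace_def)

lemma module_hom_proj:
  "module_hom (\<lambda>c v i. c * v i) (\<lambda>c v i. c * v i) (proj A :: (nat \<Rightarrow> 'a::field) \<Rightarrow> _)"
  by unfold_locales (auto simp: proj_def fun_eq_iff)

lemma subspace_proj_image: "vec.subspace V \<Longrightarrow> vec.subspace (proj A ` V)"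
  by (rule module_hom.subspace_image[OF module_hom_proj])

lemma code_sum_eq_span:
  assumes "vec.subspace L" "vec.subspace M"
  shows "code_sum L M = vec.span (L \<union> M)"
proof -
  have "vec.span L = L" "vec.span M = M"
    using assms vec.span_eq_iff by blast+
  then show ?thesis
    by (simp only: code_sum_def vadd_eq vec.span_Un)
qed

lemma subspace_code_sum: "vec.subspace L \<Longrightarrow> vec.subspace M \<Longrightarrow> vec.subspace (code_sum L M)"
  by (simp add: code_sum_eq_span)

lemma code_sum_subset_left:
  fixes L M :: "(nat \<Rightarrow> 'a::monoid_add) set"
  assumes "0 \<in> M"
  shows "L \<subseteq> code_sum L M"
proof
  fix x assume "x \<in> L"
  then show "x \<in> code_sum L M"
    using assms unfolding code_sum_def vadd_eq by (intro CollectI exI[of _ x] exI[of _ 0]) simp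
qed

lemma code_sum_subset_right:
  fixes L M :: "(nat \<Rightarrow> 'a::monoid_add) set"
  assumes "0 \<in> L"
  shows "M \<subseteq> code_sum L M"
proof
  fix x assume "x \<in> M"
  then show "x \<in> code_sum L M"
    using assms unfolding code_sum_def vadd_eq by (intro CollectI exI[of _ 0] exI[of _ x]) simp
qed

lemma sum_fun_apply: "(\<Sum>i\<in>I. f i) x = (\<Sum>i\<in>I. f i x)"
  by (induction I rule: infinite_finite_induct) auto

lemma vecs_eq_sum_unit_vectors:
  fixes v :: "nat \<Rightarrow> 'a::field"
  assumes "finite I" "v \<in> vecs I"
  shows "v = (\<Sum>i\<in>I. (\<lambda>j. v i * (if j = i then 1 else 0)))"
  using assms by (auto simp: fun_eq_iff vecs_def sum_fun_apply if_distrib cong: if_cong)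

text \<open>Extend a basis of V by v and send v to 1 and the basis to 0; the resulting linear
  functional is the dot product with its values u on the unit vectors of I.\<close>
lemma dual_vector_separates:
  fixes V :: "(nat \<Rightarrow> 'a::field) set"
  assumes "finite I" "vec.subspace V" "v \<in> vecs I" "v \<notin> V"
  obtains u where "u \<in> vecs I" "\<forall>a\<in>V \<inter> vecs I. (\<Sum>i\<in>I. u i * a i) = 0"
    "(\<Sum>i\<in>I. u i * v i) \<noteq> 0"
proof -
  interpret vec_functional:
    vector_space_pair "\<lambda>(c :: 'a) (v :: nat \<Rightarrow> 'a) i. c * v i" "(*) :: 'a \<Rightarrow> 'a \<Rightarrow> 'a"
    by unfold_locales (simp_all add: algebra_simps)
  obtain B where B: "B \<subseteq> V" "vec.independent B" "V \<subseteq> vec.span B"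
    using vec.basis_exists by blast
  have "v \<notin> vec.span B"
    using assms(2,4) B(1) vec.span_mono vec.span_eq_iff by blast
  then have "vec.independent (insert v B)"
    using B(2) vec.independent_insertI by blast
  then obtain g where g: "Vector_Spaces.linear (\<lambda>c v i. c * v i) (*) g"
    "\<forall>x\<in>insert v B. g x = (if x = v then 1 else 0)"
    using vec_functional.linear_independent_extend[of "insert v B" "\<lambda>x. if x = v then 1 else 0"]
    by blast
  have g_B: "g b = 0" if "b \<in> B" for b
    using g(2) B(1) assms(4) that by auto
  have g_V: "g a = 0" if "a \<in> V" for a
    using vec_functional.linear_eq_0_on_span[OF g(1) g_B] B(3) that by blast
  define u where "u i = (if i \<in> I then g (\<lambda>j. if j = i then 1 else 0) else 0)" for i
  have u_g: "(\<Sum>i\<in>I. u i * a i) = g a" if "a \<in> vecs I" for a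
  proof -
    have "g a = (\<Sum>i\<in>I. a i * g (\<lambda>j. if j = i then 1 else 0))"
      by (subst vecs_eq_sum_unit_vectors[OF assms(1) that])
        (simp add: vec_functional.linear_sum[OF g(1)] vec_functional.linear_scale[OF g(1)])
    then show ?thesis
      by (simp add: u_def mult.commute)
  qed
  show ?thesis
    using that[of u] u_g g_V g(2) assms(3) by (auto simp: u_def vecs_def)
qed

definition dot :: "nat \<Rightarrow> (nat \<Rightarrow> 'a::semiring_0) \<Rightarrow> (nat \<Rightarrow> 'a) \<Rightarrow> 'a" where
  "dot n u v = (\<Sum>i<n. u i * v i)"

lemma mem_dual_iff: "u \<in> dual n L \<longleftrightarrow> u \<in> vecs {..<n} \<and> (\<forall>c\<in>L. dot n u c = 0)"
  by (simp add: dual_def dot_def)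

lemma dot_add: "dot n u (v + w) = dot n u v + dot n u w"
  by (simp add: dot_def distrib_left sum.distrib)

lemma dot_eq_sum_proj:
  assumes "u \<in> vecs B" "B \<subseteq> {..<n}"
  shows "dot n u g = (\<Sum>i\<in>B. u i * proj B g i)"
proof -
  have "dot n u g = (\<Sum>i\<in>B. u i * g i)"
    unfolding dot_def using assms by (intro sum.mono_neutral_right) (auto simp: vecs_def)
  also have "\<dots> = (\<Sum>i\<in>B. u i * proj B g i)"
    by (simp add: proj_def)
  finally show ?thesis .
qed

section \<open>Generator matrices\<close>

lemma sum_lessThan_add: "(\<Sum>i<a + b. g i) = (\<Sum>i<a. g i) + (\<Sum>i<b. g (a + i))" for a b :: nat
proof -
  have "(\<Sum>i<a + b. g i) = (\<Sum>i<a. g i) + (\<Sum>i\<in>{a..<a + b}. g i)"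
    by (simp add: lessThan_atLeast0 sum.atLeastLessThan_concat)
  also have "(\<Sum>i\<in>{a..<a + b}. g i) = (\<Sum>i<b. g (a + i))"
    using sum.atLeastLessThan_shift_bounds[of g 0 a b]
    by (simp add: lessThan_atLeast0 comp_def add.commute)
  finally show ?thesis .
qed

lemma lincomb_add: "lincomb G (a + b) = lincomb G a + lincomb G b"
  by (simp add: lincomb_def fun_eq_iff distrib_right sum.distrib)

lemma lincomb_diff: "lincomb G (a - b) = lincomb G a - lincomb G b"
  by (simp add: lincomb_def fun_eq_iff left_diff_distrib sum_subtractf)

lemma lincomb_zero [simp]: "lincomb G 0 = 0"
  by (simp add: lincomb_def fun_eq_iff)

lemma lincomb_cong: "(\<And>i. i < length G \<Longrightarrow> a i = b i) \<Longrightarrow> lincomb G a = lincomb G b"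
  by (simp add: lincomb_def)

lemma lincomb_append: "lincomb (G @ H) d = lincomb G d + lincomb H (\<lambda>i. d (length G + i))"
  by (simp add: lincomb_def fun_eq_iff sum_lessThan_add nth_append)

lemma lincomb_in_vecs: "set G \<subseteq> vecs I \<Longrightarrow> lincomb G c \<in> vecs I"
  unfolding vecs_def lincomb_def by (auto intro!: sum.neutral dest!: nth_mem)

lemma lincomb_scale: "lincomb G (\<lambda>i. c * a i) = (\<lambda>j. c * lincomb G a j)"
  by (simp add: lincomb_def fun_eq_iff sum_distrib_left mult.assoc)

lemma lincomb_uminus: "lincomb G (- a) = - lincomb G a"
  by (simp add: lincomb_def fun_eq_iff sum_negf)

lemma module_hom_lincomb: "module_hom (\<lambda>c v i. c * v i) (\<lambda>c v i. c * v i) (lincomb G)"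
  by (simp add: module_hom_def module_hom_axioms_def module_iff_vector_space vec.vector_space_axioms
      lincomb_add lincomb_scale)

lemma row_space_eq_range: "row_space G = range (lincomb G)"
proof
  show "row_space G \<subseteq> range (lincomb G)"
    by (auto simp: row_space_def)
  have "lincomb G c = lincomb G (proj {..<length G} c)" for c
    by (rule lincomb_cong) (simp add: proj_def)
  then show "range (lincomb G) \<subseteq> row_space G"
    unfolding row_space_def using proj_in_vecs by blast
qed

lemma subspace_row_space: "vec.subspace (row_space G)"
  unfolding row_space_eq_range
  by (rule module_hom.subspace_image[OF module_hom_lincomb vec.subspace_UNIV])

lemma row_space_append: "row_space (G @ H) = code_sum (row_space G) (row_space H)"
  unfolding row_space_eq_range code_sum_def vadd_eq
proof (intro equalityI subsetI)
  fix x assume "x \<in> range (lincomb (G @ H))"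
  then show "x \<in> {u + v |u v. u \<in> range (lincomb G) \<and> v \<in> range (lincomb H)}"
    by (auto simp: lincomb_append)
next
  fix x assume "x \<in> {u + v |u v. u \<in> range (lincomb G) \<and> v \<in> range (lincomb H)}"
  then obtain a b where "x = lincomb G a + lincomb H b"
    by blast
  also have "\<dots> = lincomb (G @ H) (\<lambda>i. if i < length G then a i else b (i - length G))"
    by (simp add: lincomb_append cong: lincomb_cong)
  finally show "x \<in> range (lincomb (G @ H))"
    by blast
qed

lemma rows_indep_append:
  assumes "rows_indep (G @ H)" "a \<in> vecs {..<length G}" "b \<in> vecs {..<length H}"
    and "lincomb G a + lincomb H b = 0"
  shows "a = 0 \<and> b = 0"
proof -
  define d where "d i = (if i < length G then a i else b (i - length G))" for i
  have "d \<in> vecs {..<length (G @ H)}"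
    using assms(2,3) by (auto simp: d_def vecs_def)
  moreover have "lincomb (G @ H) d = 0"
    using assms(4) by (simp add: lincomb_append d_def cong: lincomb_cong)
  ultimately have d0: "d = 0"
    using assms(1) by (simp add: rows_indep_def)
  have "a i = 0" for i
    using fun_cong[OF d0, of i] assms(2) by (cases "i < length G") (auto simp: d_def vecs_def)
  moreover have "b i = 0" for i
    using fun_cong[OF d0, of "length G + i"] assms(3)
    by (cases "i < length H") (auto simp: d_def vecs_def)
  ultimately show ?thesis
    by (simp add: fun_eq_iff)
qed

section \<open>Reduced states and channels\<close>

lemma reduced_state_translate:
  fixes \<Phi> :: "(nat \<Rightarrow> 'a::{finite,ab_group_add}) \<Rightarrow> complex"
  assumes "c \<in> vecs ({..<N} - A)"
  shows "reduced_state N A (\<lambda>w. \<Phi> (w - c)) = reduced_state N A \<Phi>"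
proof (intro ext)
  fix x y :: "nat \<Rightarrow> 'a"
  show "reduced_state N A (\<lambda>w. \<Phi> (w - c)) x y = reduced_state N A \<Phi> x y"
    unfolding reduced_state_def vadd_eq
    by (rule sum.reindex_bij_witness[of _ "\<lambda>z. z + c" "\<lambda>z. z - c"])
      (auto simp: assms add_in_vecs diff_in_vecs algebra_simps)
qed

lemma reduced_state_flip_sign:
  fixes \<Phi>0 \<Phi>1 :: "(nat \<Rightarrow> 'a::{finite,monoid_add}) \<Rightarrow> complex"
  assumes cross: "\<And>x y z :: nat \<Rightarrow> 'a. x \<in> vecs A \<Longrightarrow> y \<in> vecs A \<Longrightarrow> z \<in> vecs ({..<N} - A) \<Longrightarrow>
      \<Phi>0 (x + z) * cnj (\<Phi>1 (y + z)) = 0"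
    and "x \<in> vecs A" "y \<in> vecs A"
  shows "reduced_state N A (\<lambda>w. \<Phi>0 w + \<Phi>1 w) x y = reduced_state N A (\<lambda>w. \<Phi>0 w - \<Phi>1 w) x y"
  unfolding reduced_state_def vadd_eq
proof (rule sum.cong)
  fix z :: "nat \<Rightarrow> 'a" assume z: "z \<in> vecs ({..<N} - A)"
  have "\<Phi>0 (x + z) * cnj (\<Phi>1 (y + z)) = 0"
    using cross assms(2,3) z by blast
  moreover have "\<Phi>1 (x + z) * cnj (\<Phi>0 (y + z)) = 0"
    using arg_cong[OF cross[OF assms(3,2) z], of cnj] by (simp add: mult.commute)
  ultimately show "(\<Phi>0 (x + z) + \<Phi>1 (x + z)) * cnj (\<Phi>0 (y + z) + \<Phi>1 (y + z))
      = (\<Phi>0 (x + z) - \<Phi>1 (x + z)) * cnj (\<Phi>0 (y + z) - \<Phi>1 (y + z))"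
    by (auto simp: algebra_simps)
qed simp

lemma sum_nth_map_distinct:
  "distinct xs \<Longrightarrow> (\<Sum>j<length (map K xs). g (map K xs ! j)) = (\<Sum>i\<in>set xs. g (K i))"
  by (simp add: sum_list_distinct_conv_sum_set[symmetric] sum_list_sum_nth atLeast0LessThan)

definition relabel_kraus :: "((nat \<Rightarrow> 'a::zero) \<times> 'i) set \<Rightarrow> ((nat \<Rightarrow> 'a) \<times> 'i \<Rightarrow> nat \<Rightarrow> 'a)
    \<Rightarrow> 'i \<Rightarrow> (nat \<Rightarrow> 'a) \<Rightarrow> (nat \<Rightarrow> 'a) \<Rightarrow> complex" where
  "relabel_kraus P E i s x = (if (s, i) \<in> P \<and> x = E (s, i) then 1 else 0)"

lemma relabel_kraus_complete:
  fixes E :: "(nat \<Rightarrow> 'a::{finite,zero}) \<times> 'i \<Rightarrow> nat \<Rightarrow> 'a"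
  assumes "finite A" "finite S" "finite I" "P \<subseteq> S \<times> I" "bij_betw E P (vecs A)" "x \<in> vecs A"
  shows "(\<Sum>i\<in>I. \<Sum>s\<in>S. cnj (relabel_kraus P E i s x) * relabel_kraus P E i s y)
    = (if x = y then 1 else 0)"
proof -
  have "(\<Sum>i\<in>I. \<Sum>s\<in>S. cnj (relabel_kraus P E i s x) * relabel_kraus P E i s y)
      = (\<Sum>p\<in>S \<times> I. if p \<in> P \<and> E p = x \<and> E p = y then 1 else 0)"
    by (subst sum.swap) (auto simp: sum.cartesian_product relabel_kraus_def intro!: sum.cong)
  also have "\<dots> = (\<Sum>p\<in>P. if E p = x \<and> E p = y then 1 else 0)"
    using assms(2,3,4) by (intro sum.mono_neutral_cong_right) auto
  also have "\<dots> = (\<Sum>w\<in>vecs A. if w = x \<and> w = y then 1 else 0)"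
    using sum.reindex_bij_betw[OF assms(5), of "\<lambda>w. if w = x \<and> w = y then 1 else 0"] by simp
  also have "\<dots> = (if x = y then 1 else 0)"
    using finite_vecs[OF assms(1), where 'a = 'a] assms(6)
    by (cases "x = y") (auto simp: sum.delta intro!: sum.neutral)
  finally show ?thesis .
qed

lemma relabel_kraus_sandwich:
  fixes E :: "(nat \<Rightarrow> 'a::{finite,zero}) \<times> 'i \<Rightarrow> nat \<Rightarrow> 'a"
  assumes "finite A" "bij_betw E P (vecs A)"
  shows "(\<Sum>x\<in>vecs A. \<Sum>y\<in>vecs A. relabel_kraus P E i s x * X x y * cnj (relabel_kraus P E i t y))
    = (if (s, i) \<in> P \<and> (t, i) \<in> P then X (E (s, i)) (E (t, i)) else 0)"
proof (cases "(s, i) \<in> P \<and> (t, i) \<in> P")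
  case True
  then have "relabel_kraus P E i s x * X x y * cnj (relabel_kraus P E i t y)
      = (if y = E (t, i) then if x = E (s, i) then X x y else 0 else 0)" for x y
    by (simp add: relabel_kraus_def)
  moreover have "E (s, i) \<in> vecs A" "E (t, i) \<in> vecs A"
    using True bij_betwE[OF assms(2)] by auto
  ultimately show ?thesis
    using True finite_vecs[OF assms(1), where 'a = 'a] by (simp add: sum.delta')
next
  case False
  then show ?thesis
    by (auto simp: relabel_kraus_def intro!: sum.neutral)
qed

lemma relabeling_channel:
  fixes E :: "(nat \<Rightarrow> 'a::{finite,zero}) \<times> 'i \<Rightarrow> nat \<Rightarrow> 'a"
  assumes "finite A" "finite S" "finite I" "P \<subseteq> S \<times> I" "bij_betw E P (vecs A)"
  obtains Ks where "kraus_tp A S Ks"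
    and "\<And>X s t. kraus_apply A Ks X s t =
      (\<Sum>i\<in>I. if (s, i) \<in> P \<and> (t, i) \<in> P then X (E (s, i)) (E (t, i)) else 0)"
proof -
  obtain idx where "set idx = I" "distinct idx"
    using finite_distinct_list assms(3) by blast
  define Ks where "Ks = map (relabel_kraus P E) idx"
  have sum_Ks: "(\<Sum>j<length Ks. g (Ks ! j)) = (\<Sum>i\<in>I. g (relabel_kraus P E i))" for g
    unfolding Ks_def using sum_nth_map_distinct \<open>set idx = I\<close> \<open>distinct idx\<close> by blast
  have "kraus_tp A S Ks"
    unfolding kraus_tp_def
  proof (intro ballI)
    fix x y :: "nat \<Rightarrow> 'a" assume "x \<in> vecs A"
    have "(\<Sum>j<length Ks. \<Sum>s\<in>S. cnj ((Ks ! j) s x) * (Ks ! j) s y)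
        = (\<Sum>i\<in>I. \<Sum>s\<in>S. cnj (relabel_kraus P E i s x) * relabel_kraus P E i s y)"
      by (rule sum_Ks)
    also have "\<dots> = (if x = y then 1 else 0)"
      by (rule relabel_kraus_complete[OF assms \<open>x \<in> vecs A\<close>])
    finally show "(\<Sum>j<length Ks. \<Sum>s\<in>S. cnj ((Ks ! j) s x) * (Ks ! j) s y)
        = (if x = y then 1 else 0)" .
  qed
  moreover have "kraus_apply A Ks X s t =
      (\<Sum>i\<in>I. if (s, i) \<in> P \<and> (t, i) \<in> P then X (E (s, i)) (E (t, i)) else 0)" for X s t
  proof -
    have "kraus_apply A Ks X s t = (\<Sum>i\<in>I. \<Sum>x\<in>vecs A. \<Sum>y\<in>vecs A.
        relabel_kraus P E i s x * X x y * cnj (relabel_kraus P E i t y))"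
      unfolding kraus_apply_def by (rule sum_Ks)
    then show ?thesis
      by (simp add: relabel_kraus_sandwich[OF assms(1,5)])
  qed
  ultimately show ?thesis
    using that by blast
qed

lemma not_authorized_if_same_reduced_states:
  assumes "(\<Sum>s\<in>vecs {..<length G01}. (cmod (psi s))\<^sup>2) = 1"
    and "(\<Sum>s\<in>vecs {..<length G01}. (cmod (chi s))\<^sup>2) = 1"
    and "\<And>x y. x \<in> vecs A \<Longrightarrow> y \<in> vecs A \<Longrightarrow>
      reduced_state (n + length GE) A (ecss_encode n G01 G1 GE psi) x y
        = reduced_state (n + length GE) A (ecss_encode n G01 G1 GE chi) x y"
    and "s \<in> vecs {..<length G01}" "t \<in> vecs {..<length G01}"
    and "psi s * cnj (psi t) \<noteq> chi s * cnj (chi t)"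
  shows "\<not> ecss_authorized n G01 G1 GE A"
proof
  assume "ecss_authorized n G01 G1 GE A"
  then obtain Ks where Ks: "\<forall>\<phi>. (\<Sum>s\<in>vecs {..<length G01}. (cmod (\<phi> s))\<^sup>2) = 1 \<longrightarrow>
      (\<forall>s\<in>vecs {..<length G01}. \<forall>t\<in>vecs {..<length G01}.
        kraus_apply A Ks (reduced_state (n + length GE) A (ecss_encode n G01 G1 GE \<phi>)) s t
          = \<phi> s * cnj (\<phi> t))"
    unfolding ecss_authorized_def by blast
  have "kraus_apply A Ks (reduced_state (n + length GE) A (ecss_encode n G01 G1 GE psi)) s t
      = kraus_apply A Ks (reduced_state (n + length GE) A (ecss_encode n G01 G1 GE chi)) s t"
    unfolding kraus_apply_def using assms(3) by (intro sum.cong refl) auto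
  then show False
    using Ks assms(1,2,4,5,6) by simp
qed

section \<open>Hamming weights\<close>

lemma hwt_le: "hwt n v \<le> n"
  using card_mono[of "{..<n}" "{i. i < n \<and> v i \<noteq> 0}"] by (auto simp: hwt_def)

lemma finite_hwt_image: "finite (hwt n ` D)"
  by (rule finite_subset[of _ "{..n}"]) (auto simp: hwt_le)

lemma exists_vanishing_set_iff: "(\<exists>J. J \<subseteq> {..<n} \<and> card J = \<tau> \<and> (\<forall>i\<in>J. v i = 0)) \<longleftrightarrow> \<tau> + hwt n v \<le> n"
proof -
  define Z where "Z = {i. i < n \<and> v i = 0}"
  have "card Z + hwt n v = card (Z \<union> {i. i < n \<and> v i \<noteq> 0})"
    unfolding hwt_def by (rule card_Un_disjoint[symmetric]) (auto simp: Z_def)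
  also have "Z \<union> {i. i < n \<and> v i \<noteq> 0} = {..<n}"
    by (auto simp: Z_def)
  finally have card_Z: "card Z + hwt n v = n"
    by simp
  have "(\<exists>J. J \<subseteq> {..<n} \<and> card J = \<tau> \<and> (\<forall>i\<in>J. v i = 0)) \<longleftrightarrow> (\<exists>J \<subseteq> Z. card J = \<tau>)"
    by (auto simp: Z_def)
  also have "\<dots> \<longleftrightarrow> \<tau> \<le> card Z"
    using obtain_subset_with_card_n[of \<tau> Z] card_mono[of Z] by (auto simp: Z_def)
  also have "\<dots> \<longleftrightarrow> \<tau> + hwt n v \<le> n"
    using card_Z by linarith
  finally show ?thesis .
qed

lemma all_sets_meet_supports_iff:
  assumes "D \<noteq> {}"
  shows "(\<forall>J. J \<subseteq> {..<n} \<and> card J = \<tau> \<longrightarrow> (\<forall>v\<in>D. \<exists>i\<in>J. v i \<noteq> 0))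
    \<longleftrightarrow> n + 1 - Min (hwt n ` D) \<le> \<tau>"
proof -
  note fin = finite_hwt_image[of n D]
  have "(\<forall>J. J \<subseteq> {..<n} \<and> card J = \<tau> \<longrightarrow> (\<forall>v\<in>D. \<exists>i\<in>J. v i \<noteq> 0))
      \<longleftrightarrow> (\<forall>v\<in>D. \<not> (\<exists>J. J \<subseteq> {..<n} \<and> card J = \<tau> \<and> (\<forall>i\<in>J. v i = 0)))"
    by blast
  also have "\<dots> \<longleftrightarrow> (\<forall>v\<in>D. n < \<tau> + hwt n v)"
    unfolding exists_vanishing_set_iff by auto
  also have "\<dots> \<longleftrightarrow> n < \<tau> + Min (hwt n ` D)"
  proof
    assume "\<forall>v\<in>D. n < \<tau> + hwt n v"
    moreover have "Min (hwt n ` D) \<in> hwt n ` D"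
      using Min_in[OF fin] assms by simp
    ultimately show "n < \<tau> + Min (hwt n ` D)"
      by force
  next
    assume "n < \<tau> + Min (hwt n ` D)"
    moreover have "Min (hwt n ` D) \<le> hwt n v" if "v \<in> D" for v
      using fin that by simp
    ultimately show "\<forall>v\<in>D. n < \<tau> + hwt n v"
      by (meson add_le_cancel_left less_le_trans)
  qed
  also have "\<dots> \<longleftrightarrow> n + 1 - Min (hwt n ` D) \<le> \<tau>"
    by (intro iffI; linarith)
  finally show ?thesis .
qed

section \<open>The extended CSS scheme\<close>

locale ecss =
  fixes n :: nat and G01 G1 GE :: "(nat \<Rightarrow> 'a::{finite,field}) list"
    and F0 F1 :: "(nat \<Rightarrow> 'a) set"
  assumes F0_code: "linear_code n F0" and F1_code: "linear_code n F1"
    and F1_psubset_F0: "F1 \<subset> F0"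
    and G1_gen: "generator_matrix G1 F1" and G0_gen: "generator_matrix (G01 @ G1) F0"
    and GE_vecs: "set GE \<subseteq> vecs {..<n}" and F0_inter_E: "F0 \<inter> row_space GE = {zerov}"
begin

abbreviation "e \<equiv> length GE"
abbreviation "secrets \<equiv> vecs {..<length G01} :: (nat \<Rightarrow> 'a) set"
abbreviation "E \<equiv> row_space GE"
abbreviation "word \<equiv> ecss_word n G01 G1 GE"

lemma finite_secrets: "finite secrets"
  by (simp add: finite_vecs)

lemma F0_subspace: "vec.subspace F0" and F0_vecs: "F0 \<subseteq> vecs {..<n}"
  using F0_code by (simp_all add: linear_code_iff_subspace)

lemma F1_subspace: "vec.subspace F1"
  using F1_code by (simp add: linear_code_iff_subspace)

lemma F1_eq_range: "F1 = range (lincomb G1)"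
  using G1_gen by (simp add: generator_matrix_def row_space_eq_range)

lemma lincomb_G01_in_F0: "lincomb G01 s \<in> F0"
proof -
  have "F0 = code_sum (row_space G01) (row_space G1)"
    using G0_gen by (simp add: generator_matrix_def row_space_append)
  moreover have "row_space G01 \<subseteq> code_sum (row_space G01) (row_space G1)"
    by (rule code_sum_subset_left[OF vec.subspace_0[OF subspace_row_space]])
  ultimately show ?thesis
    by (auto simp: row_space_eq_range)
qed

lemma lincomb_G1_in_F1: "lincomb G1 r \<in> F1"
  by (simp add: F1_eq_range)

lemma lincomb_GE_in_E: "lincomb GE r \<in> E"
  by (simp add: row_space_eq_range)

lemma F0_elim:
  assumes "c \<in> F0"
  obtains s r where "s \<in> secrets" "r \<in> vecs {..<length G1}" "c = lincomb G01 s + lincomb G1 r"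
proof -
  obtain d where d: "d \<in> vecs {..<length G01 + length G1}" "c = lincomb (G01 @ G1) d"
    using assms G0_gen by (auto simp: generator_matrix_def row_space_def)
  have "c = lincomb G01 (proj {..<length G01} d) + lincomb G1 (\<lambda>i. d (length G01 + i))"
    using d(2) by (simp add: lincomb_append proj_def cong: lincomb_cong)
  moreover have "(\<lambda>i. d (length G01 + i)) \<in> vecs {..<length G1}"
    using d(1) by (simp add: vecs_def)
  ultimately show ?thesis
    using that proj_in_vecs by blast
qed

lemma lincomb_independent:
  "s \<in> secrets \<Longrightarrow> r \<in> vecs {..<length G1} \<Longrightarrow> lincomb G01 s + lincomb G1 r = 0 \<Longrightarrow> s = 0 \<and> r = 0"
  using rows_indep_append G0_gen by (auto simp: generator_matrix_def)

lemma word_diff: "word s r1 r2 - word s' r1' r2' = word (s - s') (r1 - r1') (r2 - r2')"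
  by (simp add: ecss_word_def fun_eq_iff lincomb_diff)

lemma word_add: "word s r1 r2 + word s' r1' r2' = word (s + s') (r1 + r1') (r2 + r2')"
  by (simp add: ecss_word_def fun_eq_iff lincomb_add)

lemma word_in_vecs: "word s r1 r2 \<in> vecs {..<n + e}"
  by (simp add: ecss_word_def vecs_def)

lemma word_eq_0:
  assumes "s \<in> secrets" "r1 \<in> vecs {..<length G1}" "r2 \<in> vecs {..<e}" "word s r1 r2 = 0"
  shows "s = 0 \<and> r1 = 0 \<and> r2 = 0"
proof -
  have r2: "r2 = 0"
  proof (rule ext)
    fix i show "r2 i = 0 i"
      using fun_cong[OF assms(4), of "n + i"] assms(3)
      by (cases "i < e") (auto simp: ecss_word_def vecs_def)
  qed
  have "lincomb G01 s + lincomb G1 r1 = 0"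
  proof (rule ext)
    fix i show "(lincomb G01 s + lincomb G1 r1) i = 0 i"
    proof (cases "i < n")
      case True
      then show ?thesis
        using fun_cong[OF assms(4), of i] r2 by (simp add: ecss_word_def)
    next
      case False
      have "lincomb G01 s \<in> vecs {..<n}" "lincomb G1 r1 \<in> vecs {..<n}"
        using lincomb_G01_in_F0 lincomb_G1_in_F1 F1_psubset_F0 F0_vecs by blast+
      then show ?thesis
        using False by (simp add: vecs_def)
    qed
  qed
  then show ?thesis
    using lincomb_independent assms(1,2) r2 by blast
qed

lemma word_inj:
  assumes "r1 \<in> vecs {..<length G1}" "r2 \<in> vecs {..<e}"
    and "r1' \<in> vecs {..<length G1}" "r2' \<in> vecs {..<e}"
    and "word s r1 r2 = word s r1' r2'"
  shows "r1 = r1' \<and> r2 = r2'"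
  using word_eq_0[of 0 "r1 - r1'" "r2 - r2'"] word_diff[of s r1 r2 s r1' r2'] assms
  by (simp add: diff_in_vecs)

definition coset :: "(nat \<Rightarrow> 'a) \<Rightarrow> (nat \<Rightarrow> 'a) set" where
  "coset s = {word s r1 r2 | r1 r2. r1 \<in> vecs {..<length G1} \<and> r2 \<in> vecs {..<e}}"

lemma coset_in_vecs: "coset s \<subseteq> vecs {..<n + e}"
  using word_in_vecs by (auto simp: coset_def)

lemma finite_coset: "finite (coset s)"
  using coset_in_vecs finite_vecs[of "{..<n + e}"] finite_subset by blast

lemma coset_shift:
  assumes "w0 \<in> coset s"
  shows "w \<in> coset s \<longleftrightarrow> w - w0 \<in> coset 0"
proof -
  obtain a b where ab: "a \<in> vecs {..<length G1}" "b \<in> vecs {..<e}" "w0 = word s a b"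
    using assms by (auto simp: coset_def)
  show ?thesis
  proof
    assume "w \<in> coset s"
    then obtain c d where "c \<in> vecs {..<length G1}" "d \<in> vecs {..<e}" "w = word s c d"
      by (auto simp: coset_def)
    then show "w - w0 \<in> coset 0"
      using ab word_diff[of s c d s a b] by (auto simp: coset_def intro!: diff_in_vecs)
  next
    assume "w - w0 \<in> coset 0"
    then obtain c d where "c \<in> vecs {..<length G1}" "d \<in> vecs {..<e}" "w - w0 = word 0 c d"
      by (auto simp: coset_def)
    then have "w = word s (c + a) (d + b)" "c + a \<in> vecs {..<length G1}" "d + b \<in> vecs {..<e}"
      using ab word_add[of 0 c d s a b] by (auto simp: add_in_vecs diff_eq_eq)
    then show "w \<in> coset s"
      by (auto simp: coset_def)
  qed
qed

lemma coset_eq_shift_image: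
  assumes "w0 \<in> coset s"
  shows "coset s = (\<lambda>c. w0 + c) ` coset 0"
proof (intro equalityI subsetI)
  fix w assume "w \<in> coset s"
  then have "w - w0 \<in> coset 0"
    using coset_shift[OF assms] by blast
  moreover have "w = w0 + (w - w0)"
    by simp
  ultimately show "w \<in> (\<lambda>c. w0 + c) ` coset 0"
    by blast
next
  fix w assume "w \<in> (\<lambda>c. w0 + c) ` coset 0"
  then obtain c where "c \<in> coset 0" "w = w0 + c"
    by blast
  then show "w \<in> coset s"
    using coset_shift[OF assms, of w] by simp
qed

lemma coset_disjoint:
  assumes "s \<in> secrets" "s' \<in> secrets" "w \<in> coset s" "w \<in> coset s'"
  shows "s = s'"
proof -
  obtain a b a' b' where "a \<in> vecs {..<length G1}" "b \<in> vecs {..<e}" "w = word s a b"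
    "a' \<in> vecs {..<length G1}" "b' \<in> vecs {..<e}" "w = word s' a' b'"
    using assms(3,4) by (auto simp: coset_def)
  then have "word (s - s') (a - a') (b - b') = 0"
    using word_diff[of s a b s' a' b'] by simp
  then show ?thesis
    using word_eq_0[of "s - s'" "a - a'" "b - b'"] assms(1,2) \<open>a \<in> _\<close> \<open>b \<in> _\<close> \<open>a' \<in> _\<close> \<open>b' \<in> _\<close>
    by (simp add: diff_in_vecs)
qed

lemma card_coset_0: "card (coset 0) = card (UNIV :: 'a set) ^ (length G1 + e)"
proof -
  have "coset 0 = (\<lambda>(r1, r2). word 0 r1 r2) ` (vecs {..<length G1} \<times> vecs {..<e})"
    by (auto simp: coset_def)
  moreover have "inj_on (\<lambda>(r1, r2). word 0 r1 r2) (vecs {..<length G1} \<times> vecs {..<e})"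
    using word_inj by (auto simp: inj_on_def)
  ultimately show ?thesis
    by (simp add: card_image card_cartesian_product card_vecs power_add)
qed

definition amp_norm :: complex where
  "amp_norm = 1 / of_real (sqrt (real (card (UNIV :: 'a set) ^ (length G1 + e))))"

lemma amp_norm_normalizes: "amp_norm * cnj amp_norm * of_nat (card (coset 0)) = 1"
proof -
  define Q where "Q = real (card (UNIV :: 'a set) ^ (length G1 + e))"
  have "Q > 0"
    by (simp add: Q_def card_gt_0_iff)
  then have "(1 / sqrt Q) * (1 / sqrt Q) * Q = 1"
    by (simp add: field_simps)
  then have "complex_of_real ((1 / sqrt Q) * (1 / sqrt Q) * Q) = 1"
    by simp
  moreover have "amp_norm = complex_of_real (1 / sqrt Q)"
    by (simp add: amp_norm_def Q_def)
  moreover have "of_nat (card (coset 0)) = complex_of_real Q"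
    by (simp add: card_coset_0 Q_def)
  ultimately show ?thesis
    by (simp del: of_real_mult add: of_real_mult[symmetric])
qed

lemma ecss_amp_eq: "ecss_amp n G01 G1 GE s x = (if x \<in> coset s then amp_norm else 0)"
proof -
  let ?R = "{(r1, r2). r1 \<in> vecs {..<length G1} \<and> r2 \<in> vecs {..<e} \<and> word s r1 r2 = x}"
  have "card ?R = (if x \<in> coset s then 1 else 0)"
  proof (cases "x \<in> coset s")
    case True
    then obtain a b where "a \<in> vecs {..<length G1}" "b \<in> vecs {..<e}" "x = word s a b"
      by (auto simp: coset_def)
    then have "?R = {(a, b)}"
      using word_inj[of _ _ a b s] by auto
    then show ?thesis
      using True by simp
  next
    case False
    then have "?R = {}"
      by (auto simp: coset_def)
    then show ?thesis
      unfolding \<open>?R = {}\<close> using False by simp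
  qed
  then show ?thesis
    by (simp add: ecss_amp_def amp_norm_def)
qed

lemma ecss_encode_supported:
  assumes "S \<subseteq> secrets" "\<And>s. s \<in> secrets - S \<Longrightarrow> psi s = 0"
  shows "ecss_encode n G01 G1 GE psi x = (\<Sum>s\<in>S. psi s * ecss_amp n G01 G1 GE s x)"
  unfolding ecss_encode_def using assms finite_secrets by (intro sum.mono_neutral_right) auto

lemma ecss_encode_in_coset:
  assumes "s \<in> secrets" "x \<in> coset s"
  shows "ecss_encode n G01 G1 GE psi x = psi s * amp_norm"
proof -
  have "ecss_encode n G01 G1 GE psi x = (\<Sum>s'\<in>secrets. if s' = s then psi s' * amp_norm else 0)"
    unfolding ecss_encode_def ecss_amp_eq using coset_disjoint assms by (intro sum.cong) auto
  then show ?thesis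
    using finite_secrets assms(1) by (simp add: sum.delta')
qed

lemma ecss_encode_outside:
  "(\<And>s. s \<in> secrets \<Longrightarrow> x \<notin> coset s) \<Longrightarrow> ecss_encode n G01 G1 GE psi x = 0"
  by (simp add: ecss_encode_def ecss_amp_eq)

lemma E_vecs: "E \<subseteq> vecs {..<n}"
  using GE_vecs lincomb_in_vecs by (auto simp: row_space_eq_range)

lemma code_sum_F1_E_subspace: "vec.subspace (code_sum F1 E)"
  by (rule subspace_code_sum[OF F1_subspace subspace_row_space])

lemma code_sum_F1_E_vecs: "code_sum F1 E \<subseteq> vecs {..<n}"
proof
  fix x assume "x \<in> code_sum F1 E"
  then obtain u v where "u \<in> F1" "v \<in> E" "x = u + v"
    by (auto simp: code_sum_def)
  then show "x \<in> vecs {..<n}"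
    using F1_psubset_F0 F0_vecs E_vecs add_in_vecs by blast
qed

lemma subset_code_sum_E: "L \<subseteq> code_sum L E"
  by (rule code_sum_subset_left[OF vec.subspace_0[OF subspace_row_space]])

lemma E_subset_code_sum_F1: "E \<subseteq> code_sum F1 E"
  by (rule code_sum_subset_right[OF vec.subspace_0[OF F1_subspace]])

lemma dot_word:
  assumes "u \<in> dual n (code_sum F1 E)"
  shows "dot n u (word s r1 r2) = dot n u (lincomb G01 s)"
proof -
  have "lincomb G1 r1 \<in> code_sum F1 E" "lincomb GE r2 \<in> code_sum F1 E"
    using subset_code_sum_E E_subset_code_sum_F1 lincomb_G1_in_F1 lincomb_GE_in_E by blast+
  then have "dot n u (lincomb G1 r1) = 0" "dot n u (lincomb GE r2) = 0"
    using assms by (simp_all add: mem_dual_iff)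
  moreover have "dot n u (word s r1 r2) = dot n u (lincomb G01 s + lincomb G1 r1 + lincomb GE r2)"
    by (simp add: dot_def ecss_word_def)
  ultimately show ?thesis
    by (simp add: dot_add)
qed

lemma dual_word_detects_secret:
  assumes "u \<in> dual n (code_sum F1 E)" "u \<notin> dual n (code_sum F0 E)"
  obtains d where "d \<in> secrets" "dot n u (lincomb G01 d) \<noteq> 0"
proof -
  obtain a0 e0 where a: "a0 \<in> F0" "e0 \<in> E" "dot n u (a0 + e0) \<noteq> 0"
    using assms by (auto simp: mem_dual_iff code_sum_def)
  obtain d r where d: "d \<in> secrets" "a0 = lincomb G01 d + lincomb G1 r"
    using F0_elim[OF a(1)] by blast
  have "e0 \<in> code_sum F1 E" "lincomb G1 r \<in> code_sum F1 E"
    using a(2) E_subset_code_sum_F1 subset_code_sum_E lincomb_G1_in_F1 by blast+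
  then have "dot n u e0 = 0" "dot n u (lincomb G1 r) = 0"
    using assms(1) by (simp_all add: mem_dual_iff)
  then show ?thesis
    using that d a(3) by (simp add: dot_add)
qed

lemma ecss_encode_basis:
  "s0 \<in> secrets \<Longrightarrow> ecss_encode n G01 G1 GE (\<lambda>s. if s = s0 then 1 else 0) = ecss_amp n G01 G1 GE s0"
  using ecss_encode_supported[of "{s0}"] by (auto simp: fun_eq_iff)

lemma ecss_encode_pair:
  assumes "d \<in> secrets" "d \<noteq> 0"
  shows "ecss_encode n G01 G1 GE (\<lambda>s. if s = 0 then \<alpha> else if s = d then \<beta> else 0) w
    = \<alpha> * ecss_amp n G01 G1 GE 0 w + \<beta> * ecss_amp n G01 G1 GE d w"
  using ecss_encode_supported[of "{0, d}"] assms by auto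

lemma normalized_basis:
  "s0 \<in> secrets \<Longrightarrow> (\<Sum>s\<in>secrets. (cmod (if s = s0 then 1 else 0 :: complex))\<^sup>2) = 1"
  using finite_secrets by (simp add: if_distrib[of "\<lambda>z. (cmod z)\<^sup>2"] sum.delta' cong: if_cong)

lemma not_authorized_if_F0_word_vanishes:
  assumes "J \<subseteq> {..<n}" "c \<in> F0" "c \<notin> F1" "\<forall>i\<in>J. c i = 0"
  shows "\<not> ecss_authorized n G01 G1 GE (J \<union> {n..<n + e})"
proof -
  let ?A = "J \<union> {n..<n + e}"
  obtain d r where d: "d \<in> secrets" "r \<in> vecs {..<length G1}" "c = lincomb G01 d + lincomb G1 r"
    using F0_elim[OF assms(2)] by blast
  have "d \<noteq> 0"
    using assms(3) d(3) lincomb_G1_in_F1 by auto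
  have c_vecs: "c \<in> vecs {..<n}"
    using assms(2) F0_vecs by blast
  then have "c = word d r 0"
    using d(3) by (auto simp: ecss_word_def fun_eq_iff vecs_def)
  then have "c \<in> coset d"
    unfolding coset_def using d(2) zero_in_vecs by blast
  then have amp_d: "ecss_amp n G01 G1 GE d = (\<lambda>w. ecss_amp n G01 G1 GE 0 (w - c))"
    using coset_shift by (auto simp: fun_eq_iff ecss_amp_eq)
  have "c \<in> vecs ({..<n + e} - ?A)"
    using c_vecs assms(4) by (auto simp: vecs_def)
  then have "reduced_state (n + e) ?A (\<lambda>w. ecss_amp n G01 G1 GE 0 (w - c))
      = reduced_state (n + e) ?A (ecss_amp n G01 G1 GE 0)"
    by (rule reduced_state_translate)
  then have "reduced_state (n + e) ?A (ecss_encode n G01 G1 GE (\<lambda>s. if s = 0 then 1 else 0))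
      = reduced_state (n + e) ?A (ecss_encode n G01 G1 GE (\<lambda>s. if s = d then 1 else 0))"
    using d(1) by (simp add: ecss_encode_basis amp_d)
  then show ?thesis
    using d(1) \<open>d \<noteq> 0\<close> normalized_basis
    by (intro not_authorized_if_same_reduced_states[where psi = "\<lambda>s. if s = 0 then 1 else 0"
          and chi = "\<lambda>s. if s = d then 1 else 0" and s = 0 and t = 0]) auto
qed

text \<open>u . w equals u . s G_{F0/F1} for every w in coset s, and it only depends on the part of w
  outside the shares because u vanishes on J. So no configuration of the other qudits
  completes shares to words of both coset 0 and coset d when u . d G_{F0/F1} \<noteq> 0.\<close>
lemma dual_word_separates_cosets:
  assumes "u \<in> dual n (code_sum F1 E)" "u \<notin> dual n (code_sum F0 E)" "\<forall>i\<in>J. u i = 0"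
  obtains d where "d \<in> secrets" "d \<noteq> 0"
    "\<And>x y z. x \<in> vecs (J \<union> {n..<n + e}) \<Longrightarrow> y \<in> vecs (J \<union> {n..<n + e}) \<Longrightarrow>
      x + z \<in> coset 0 \<Longrightarrow> y + z \<notin> coset d"
proof -
  obtain d where d: "d \<in> secrets" "dot n u (lincomb G01 d) \<noteq> 0"
    using dual_word_detects_secret[OF assms(1,2)] by blast
  show thesis
  proof (rule that[OF d(1)])
    show "d \<noteq> 0"
      using d(2) by (auto simp: dot_def)
    fix x y z :: "nat \<Rightarrow> 'a"
    assume xy: "x \<in> vecs (J \<union> {n..<n + e})" "y \<in> vecs (J \<union> {n..<n + e})" and "x + z \<in> coset 0"
    show "y + z \<notin> coset d"
    proof
      assume "y + z \<in> coset d"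
      then obtain a b a' b' where "x + z = word 0 a b" "y + z = word d a' b'"
        using \<open>x + z \<in> coset 0\<close> by (auto simp: coset_def)
      then have "y - x = word d (a' - a) (b' - b)"
        using word_diff[of d a' b' 0 a b] by (metis add_diff_cancel_right diff_zero)
      then have "dot n u (y - x) \<noteq> 0"
        using dot_word[OF assms(1)] d(2) by simp
      moreover have "dot n u (y - x) = 0"
        unfolding dot_def using xy assms(3) by (intro sum.neutral) (auto simp: vecs_def)
      ultimately show False
        by contradiction
    qed
  qed
qed

lemma not_authorized_if_dual_word_vanishes:
  assumes "J \<subseteq> {..<n}" "u \<in> dual n (code_sum F1 E)" "u \<notin> dual n (code_sum F0 E)" "\<forall>i\<in>J. u i = 0"
  shows "\<not> ecss_authorized n G01 G1 GE (J \<union> {n..<n + e})"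
proof -
  let ?A = "J \<union> {n..<n + e}"
  obtain d where d: "d \<in> secrets" "d \<noteq> 0"
    and sep: "\<And>x y z. x \<in> vecs ?A \<Longrightarrow> y \<in> vecs ?A \<Longrightarrow> x + z \<in> coset 0 \<Longrightarrow> y + z \<notin> coset d"
    using dual_word_separates_cosets[OF assms(2-4)] by blast
  define h :: complex where "h = of_real (1 / sqrt 2)"
  define psi where "psi \<sigma> = (\<lambda>s. if s = 0 then h else if s = d then \<sigma> * h else 0)" for \<sigma>
  define \<Phi>0 where "\<Phi>0 w = h * ecss_amp n G01 G1 GE 0 w" for w
  define \<Phi>1 where "\<Phi>1 w = h * ecss_amp n G01 G1 GE d w" for w
  have enc: "ecss_encode n G01 G1 GE (psi \<sigma>) = (\<lambda>w. \<Phi>0 w + \<sigma> * \<Phi>1 w)" for \<sigma>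
    unfolding psi_def \<Phi>0_def \<Phi>1_def by (rule ext) (simp add: ecss_encode_pair[OF d])
  have "(cmod h)\<^sup>2 = 1 / 2"
    by (simp add: h_def norm_divide power_divide)
  then have norm: "(\<Sum>s\<in>secrets. (cmod (psi \<sigma> s))\<^sup>2) = 1" if "cmod \<sigma> = 1" for \<sigma>
    using finite_secrets d that
    by (subst sum.mono_neutral_right[of secrets "{0, d}"])
      (auto simp: psi_def norm_mult power_mult_distrib)
  have "reduced_state (n + e) ?A (\<lambda>w. \<Phi>0 w + \<Phi>1 w) x y
      = reduced_state (n + e) ?A (\<lambda>w. \<Phi>0 w - \<Phi>1 w) x y"
    if "x \<in> vecs ?A" "y \<in> vecs ?A" for x y
    using that sep by (intro reduced_state_flip_sign) (auto simp: \<Phi>0_def \<Phi>1_def ecss_amp_eq)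
  then have "reduced_state (n + e) ?A (ecss_encode n G01 G1 GE (psi 1)) x y
      = reduced_state (n + e) ?A (ecss_encode n G01 G1 GE (psi (-1))) x y"
    if "x \<in> vecs ?A" "y \<in> vecs ?A" for x y
    using that by (simp add: enc)
  moreover have "psi 1 0 * cnj (psi 1 d) \<noteq> psi (-1) 0 * cnj (psi (-1) d)"
    using d(2) by (simp add: psi_def h_def)
  ultimately show ?thesis
    using d(1) norm[of 1] norm[of "-1"]
    by (intro not_authorized_if_same_reduced_states[where psi = "psi 1" and chi = "psi (-1)"
          and s = 0 and t = d]) auto
qed

end

section \<open>Recovery\<close>

text \<open>The two assumptions are the conditions (X) and (Z) of the header. By (Z), the A-part of
  coset s is anchor s + C1_on_A; by (X), these sets are disjoint for different s. A share
  configuration is labelled (s, Inl j) if it equals anchor s + j, and (0, Inr x) if it occurs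
  in no coset; the channel outputs the first component.\<close>
locale ecss_decoder = ecss +
  fixes J :: "nat set"
  assumes J_subset: "J \<subseteq> {..<n}"
    and F0_vanishing_on_J: "\<And>c. c \<in> F0 \<Longrightarrow> \<forall>i\<in>J. c i = 0 \<Longrightarrow> c \<in> F1"
    and coset_meets_shares: "\<And>s. s \<in> secrets \<Longrightarrow> \<exists>w\<in>coset s. w \<in> vecs (J \<union> {n..<n + e})"
begin

abbreviation "A \<equiv> J \<union> {n..<n + e}"
abbreviation "B \<equiv> {..<n} - J"
abbreviation "shares_state psi \<equiv> reduced_state (n + e) A (ecss_encode n G01 G1 GE psi)"

lemma shares_partition: "{..<n + e} - A = B" "A \<union> B = {..<n + e}" "A \<inter> B = {}" "B \<inter> A = {}"
  using J_subset by auto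

lemma finite_shares: "finite A"
  using J_subset finite_subset by auto

definition anchor :: "(nat \<Rightarrow> 'a) \<Rightarrow> nat \<Rightarrow> 'a" where
  "anchor s = (SOME w. w \<in> coset s \<and> w \<in> vecs A)"

lemma anchor: "s \<in> secrets \<Longrightarrow> anchor s \<in> coset s \<and> anchor s \<in> vecs A"
  using coset_meets_shares[of s] unfolding anchor_def Bex_def by (rule someI_ex)

definition C1_on_A :: "(nat \<Rightarrow> 'a) set" where
  "C1_on_A = proj A ` coset 0"

definition decodable :: "(nat \<Rightarrow> 'a) set" where
  "decodable = (\<Union>s\<in>secrets. proj A ` coset s)"

lemma proj_coset_eq: "s \<in> secrets \<Longrightarrow> proj A ` coset s = (\<lambda>j. anchor s + j) ` C1_on_A"
proof -
  assume "s \<in> secrets"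
  then have "anchor s \<in> coset s" "anchor s \<in> vecs A"
    using anchor by blast+
  then have "coset s = (\<lambda>c. anchor s + c) ` coset 0"
    by (intro coset_eq_shift_image)
  then have "proj A ` coset s = (\<lambda>c. proj A (anchor s + c)) ` coset 0"
    by (simp add: image_image)
  also have "\<dots> = (\<lambda>j. anchor s + j) ` C1_on_A"
    using \<open>anchor s \<in> vecs A\<close> by (simp add: C1_on_A_def image_image proj_add proj_id)
  finally show ?thesis .
qed

lemma word_vanishing_on_shares:
  assumes "s \<in> secrets" "r1 \<in> vecs {..<length G1}" "r2 \<in> vecs {..<e}" "\<forall>i\<in>A. word s r1 r2 i = 0"
  shows "s = 0"
proof -
  have "r2 = 0"
  proof (rule ext)
    fix i show "r2 i = 0 i"
      using assms(3) bspec[OF assms(4), of "n + i"]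
      by (cases "i < e") (auto simp: ecss_word_def vecs_def)
  qed
  define c where "c = lincomb G01 s + lincomb G1 r1"
  have "c \<in> F0"
    unfolding c_def using lincomb_G01_in_F0 lincomb_G1_in_F1 F1_psubset_F0 F0_subspace
    by (blast intro: vec.subspace_add)
  moreover have "\<forall>i\<in>J. c i = 0"
  proof
    fix i assume "i \<in> J"
    then have "i \<in> A" "i < n"
      using J_subset by auto
    then show "c i = 0"
      using bspec[OF assms(4) \<open>i \<in> A\<close>] \<open>r2 = 0\<close> by (simp add: c_def ecss_word_def)
  qed
  ultimately have "c \<in> F1"
    by (rule F0_vanishing_on_J)
  then obtain r where "r \<in> vecs {..<length G1}" "c = lincomb G1 r"
    using G1_gen by (auto simp: generator_matrix_def row_space_def)
  then have "lincomb G01 s + lincomb G1 (r1 - r) = 0"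
    by (simp add: c_def lincomb_diff add_diff_eq)
  then show "s = 0"
    using lincomb_independent[of s "r1 - r"] assms(1,2) \<open>r \<in> _\<close> by (simp add: diff_in_vecs)
qed

lemma proj_coset_injective:
  assumes "s \<in> secrets" "s' \<in> secrets" "w \<in> coset s" "w' \<in> coset s'" "proj A w = proj A w'"
  shows "s = s'"
proof -
  obtain a b a' b' where ab: "a \<in> vecs {..<length G1}" "b \<in> vecs {..<e}" "w = word s a b"
    "a' \<in> vecs {..<length G1}" "b' \<in> vecs {..<e}" "w' = word s' a' b'"
    using assms(3,4) by (auto simp: coset_def)
  have diff: "w' - w = word (s' - s) (a' - a) (b' - b)"
    using ab(3,6) word_diff[of s' a' b' s a b] by simp
  have "\<forall>i\<in>A. word (s' - s) (a' - a) (b' - b) i = 0"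
  proof
    fix i assume "i \<in> A"
    then have "w' i = w i"
      using fun_cong[OF assms(5), of i] by (simp add: proj_def)
    then show "word (s' - s) (a' - a) (b' - b) i = 0"
      using fun_cong[OF diff, of i] by simp
  qed
  then have "s' - s = 0"
    using assms(1,2) ab by (intro word_vanishing_on_shares) (simp_all add: diff_in_vecs)
  then show ?thesis
    by simp
qed

definition labels :: "((nat \<Rightarrow> 'a) \<times> ((nat \<Rightarrow> 'a) + (nat \<Rightarrow> 'a))) set" where
  "labels = secrets \<times> Inl ` C1_on_A \<union> {0} \<times> Inr ` (vecs A - decodable)"

definition labelled_state :: "(nat \<Rightarrow> 'a) \<times> ((nat \<Rightarrow> 'a) + (nat \<Rightarrow> 'a)) \<Rightarrow> nat \<Rightarrow> 'a" where
  "labelled_state p = (case p of (s, Inl j) \<Rightarrow> anchor s + j | (s, Inr x) \<Rightarrow> x)"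

lemma labelled_state_simps [simp]:
  "labelled_state (s, Inl j) = anchor s + j" "labelled_state (s, Inr x) = x"
  by (simp_all add: labelled_state_def)

lemma C1_on_A_vecs: "C1_on_A \<subseteq> vecs A"
  by (auto simp: C1_on_A_def proj_in_vecs)

lemma anchor_in_decodable: "s \<in> secrets \<Longrightarrow> j \<in> C1_on_A \<Longrightarrow> anchor s + j \<in> decodable"
  using proj_coset_eq by (auto simp: decodable_def)

lemma anchor_add_inj:
  assumes "s \<in> secrets" "s' \<in> secrets" "j \<in> C1_on_A" "j' \<in> C1_on_A" "anchor s + j = anchor s' + j'"
  shows "s = s' \<and> j = j'"
proof -
  have "anchor s + j \<in> proj A ` coset s"
    using proj_coset_eq[OF assms(1)] assms(3) by blast
  then obtain w where "w \<in> coset s" "proj A w = anchor s + j"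
    by auto
  have "anchor s + j \<in> proj A ` coset s'"
    unfolding assms(5) using proj_coset_eq[OF assms(2)] assms(4) by blast
  then obtain w' where "w' \<in> coset s'" "proj A w' = anchor s + j"
    by auto
  with \<open>w \<in> coset s\<close> \<open>proj A w = _\<close> have "s = s'"
    using proj_coset_injective[OF assms(1,2)] by simp
  then show ?thesis
    using assms(5) by simp
qed

lemma inj_on_labelled_state: "inj_on labelled_state labels"
proof (rule inj_onI)
  fix p q assume "p \<in> labels" "q \<in> labels" "labelled_state p = labelled_state q"
  then show "p = q"
    using anchor_add_inj anchor_in_decodable by (auto simp: labels_def)
qed

lemma labelled_state_image: "labelled_state ` labels = vecs A"
proof (intro equalityI subsetI)
  fix x assume "x \<in> labelled_state ` labels"
  then show "x \<in> vecs A"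
    using anchor C1_on_A_vecs by (auto simp: labels_def labelled_state_def add_in_vecs)
next
  fix x :: "nat \<Rightarrow> 'a" assume "x \<in> vecs A"
  show "x \<in> labelled_state ` labels"
  proof (cases "x \<in> decodable")
    case True
    then obtain s where "s \<in> secrets" "x \<in> proj A ` coset s"
      by (auto simp: decodable_def)
    then obtain j where "j \<in> C1_on_A" "x = anchor s + j"
      using proj_coset_eq by auto
    then show ?thesis
      using \<open>s \<in> secrets\<close>
      by (auto simp: labels_def labelled_state_def image_iff intro!: bexI[of _ "(s, Inl j)"])
  next
    case False
    then show ?thesis
      using \<open>x \<in> vecs A\<close>
      by (auto simp: labels_def labelled_state_def image_iff intro!: bexI[of _ "(0, Inr x)"])
  qed
qed

lemma bij_betw_labelled_state: "bij_betw labelled_state labels (vecs A)"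
  by (rule bij_betw_imageI[OF inj_on_labelled_state labelled_state_image])

lemma ecss_encode_off_decodable:
  assumes "x \<in> vecs A" "x \<notin> decodable" "z \<in> vecs B"
  shows "ecss_encode n G01 G1 GE psi (x + z) = 0"
proof (rule ecss_encode_outside)
  fix s assume "s \<in> secrets"
  have "proj A (x + z) = x"
    using assms(1,3) shares_partition by (simp add: proj_add proj_id proj_disjoint)
  then show "x + z \<notin> coset s"
    using assms(2) \<open>s \<in> secrets\<close> by (force simp: decodable_def)
qed

lemma ecss_encode_anchor:
  assumes "s \<in> secrets" "j \<in> C1_on_A" "z \<in> vecs B"
  shows "ecss_encode n G01 G1 GE psi (anchor s + j + z)
    = (if j + z \<in> coset 0 then psi s * amp_norm else 0)"
proof (cases "j + z \<in> coset 0")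
  case True
  then have "anchor s + j + z \<in> coset s"
    using coset_shift[of "anchor s" s "anchor s + j + z"] anchor[OF assms(1)]
    by (simp add: add.assoc)
  then show ?thesis
    using True assms(1) by (simp add: ecss_encode_in_coset)
next
  case False
  have "anchor s + j + z \<notin> coset s'" if "s' \<in> secrets" for s'
  proof
    assume in_s': "anchor s + j + z \<in> coset s'"
    have "proj A (anchor s + j + z) = anchor s + j"
      using anchor assms C1_on_A_vecs shares_partition
      by (auto simp: proj_add proj_id proj_disjoint add_in_vecs)
    moreover have "anchor s + j \<in> proj A ` coset s"
      using proj_coset_eq assms(1,2) by blast
    ultimately have "s' = s"
      using proj_coset_injective[OF that assms(1) in_s'] by auto
    then show False
      using in_s' False coset_shift[of "anchor s" s "anchor s + j + z"] anchor[OF assms(1)]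
      by (simp add: add.assoc)
  qed
  then show ?thesis
    using False by (simp add: ecss_encode_outside)
qed

lemma reduced_state_anchor:
  assumes "s \<in> secrets" "t \<in> secrets" "j \<in> C1_on_A"
  shows "shares_state psi (anchor s + j) (anchor t + j)
    = psi s * cnj (psi t) * (amp_norm * cnj amp_norm) * of_nat (card {z \<in> vecs B. j + z \<in> coset 0})"
proof -
  have "shares_state psi (anchor s + j) (anchor t + j)
      = (\<Sum>z\<in>vecs B. if j + z \<in> coset 0 then psi s * amp_norm * cnj (psi t * amp_norm) else 0)"
    unfolding reduced_state_def shares_partition vadd_eq
    using assms by (intro sum.cong) (simp_all add: ecss_encode_anchor)
  also have "\<dots> = (\<Sum>z\<in>{z \<in> vecs B. j + z \<in> coset 0}. psi s * amp_norm * cnj (psi t * amp_norm))"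
    by (rule sum.inter_filter[symmetric]) (simp add: finite_vecs)
  finally show ?thesis
    by (simp add: algebra_simps)
qed

lemma reduced_state_off_decodable:
  "x \<in> vecs A \<Longrightarrow> x \<notin> decodable \<Longrightarrow> shares_state psi x y = 0"
  unfolding reduced_state_def shares_partition vadd_eq by (simp add: ecss_encode_off_decodable)

lemma finite_C1_on_A: "finite C1_on_A"
  using finite_coset by (simp add: C1_on_A_def)

lemma finite_undecodable: "finite (vecs A - decodable)"
  using finite_vecs[OF finite_shares] by (rule finite_Diff)

lemma sum_reduced_state_anchor:
  assumes "s \<in> secrets" "t \<in> secrets"
  shows "(\<Sum>j\<in>C1_on_A. shares_state psi (anchor s + j) (anchor t + j))
    = psi s * cnj (psi t)"
proof -
  have "(\<Sum>j\<in>C1_on_A. shares_state psi (anchor s + j) (anchor t + j))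
      = psi s * cnj (psi t) * (amp_norm * cnj amp_norm
        * of_nat (\<Sum>j\<in>C1_on_A. card {z \<in> vecs B. j + z \<in> coset 0}))"
    using assms by (simp add: reduced_state_anchor sum_distrib_left of_nat_sum mult.assoc)
  also have "(\<Sum>j\<in>C1_on_A. card {z \<in> vecs B. j + z \<in> coset 0}) = card (coset 0)"
    unfolding C1_on_A_def using finite_coset coset_in_vecs shares_partition
    by (intro sum_card_fibres_proj) auto
  finally show ?thesis
    by (simp only: amp_norm_normalizes mult_1_right)
qed

lemma sum_labels_reduced_state:
  assumes "s \<in> secrets" "t \<in> secrets"
  shows "(\<Sum>i\<in>C1_on_A <+> (vecs A - decodable). if (s, i) \<in> labels \<and> (t, i) \<in> labels
      then shares_state psi (labelled_state (s, i)) (labelled_state (t, i))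
      else 0) = psi s * cnj (psi t)"
proof -
  have "(\<Sum>i\<in>C1_on_A <+> (vecs A - decodable). if (s, i) \<in> labels \<and> (t, i) \<in> labels
      then shares_state psi (labelled_state (s, i)) (labelled_state (t, i)) else 0)
      = (\<Sum>j\<in>C1_on_A. shares_state psi (anchor s + j) (anchor t + j)) + (\<Sum>x\<in>vecs A - decodable. 0)"
    unfolding sum.Plus[OF finite_C1_on_A finite_undecodable] comp_def
  proof (intro arg_cong2[where f = "(+)"] sum.cong refl)
    fix j assume "j \<in> C1_on_A"
    then show "(if (s, Inl j) \<in> labels \<and> (t, Inl j) \<in> labels
          then shares_state psi (labelled_state (s, Inl j)) (labelled_state (t, Inl j)) else 0)
        = shares_state psi (anchor s + j) (anchor t + j)"
      using assms by (simp add: labels_def)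
  next
    fix x assume "x \<in> vecs A - decodable"
    then show "(if (s, Inr x) \<in> labels \<and> (t, Inr x) \<in> labels
          then shares_state psi (labelled_state (s, Inr x)) (labelled_state (t, Inr x)) else 0) = 0"
      by (simp add: reduced_state_off_decodable)
  qed
  then show ?thesis
    using sum_reduced_state_anchor[OF assms] by simp
qed

theorem decodable_authorized: "ecss_authorized n G01 G1 GE A"
proof -
  have "finite (C1_on_A <+> (vecs A - decodable))"
    and "labels \<subseteq> secrets \<times> (C1_on_A <+> (vecs A - decodable))"
    using finite_C1_on_A finite_undecodable by (auto simp: labels_def)
  then obtain Ks where "kraus_tp A secrets Ks" and "\<And>X s t. kraus_apply A Ks X s t =
      (\<Sum>i\<in>C1_on_A <+> (vecs A - decodable). if (s, i) \<in> labels \<and> (t, i) \<in> labels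
        then X (labelled_state (s, i)) (labelled_state (t, i)) else 0)"
    using relabeling_channel[OF finite_shares finite_secrets _ _ bij_betw_labelled_state] by blast
  then show ?thesis
    unfolding ecss_authorized_def using sum_labels_reduced_state by auto
qed

end

section \<open>Authorized sets\<close>

context ecss
begin

lemma coset_meets_shares_if_proj_in:
  assumes "proj ({..<n} - J) (lincomb G01 s) \<in> proj ({..<n} - J) ` code_sum F1 E"
  shows "\<exists>w\<in>coset s. w \<in> vecs (J \<union> {n..<n + e})"
proof -
  obtain g where g: "g \<in> code_sum F1 E" "proj ({..<n} - J) (lincomb G01 s) = proj ({..<n} - J) g"
    using assms by auto
  then obtain r1 r2 where r: "r1 \<in> vecs {..<length G1}" "r2 \<in> vecs {..<e}"
    "g = lincomb G1 r1 + lincomb GE r2"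
    using G1_gen by (auto simp: code_sum_def generator_matrix_def row_space_def)
  have "- r1 \<in> vecs {..<length G1}" "- r2 \<in> vecs {..<e}"
    using r(1,2) by (auto simp: vecs_def)
  then have "word s (- r1) (- r2) \<in> coset s"
    unfolding coset_def by blast
  moreover have "word s (- r1) (- r2) \<in> vecs (J \<union> {n..<n + e})"
    unfolding vecs_def
  proof (intro CollectI allI impI)
    fix i assume "i \<notin> J \<union> {n..<n + e}"
    then show "word s (- r1) (- r2) i = 0"
      using fun_cong[OF g(2), of i] r(3) by (auto simp: ecss_word_def proj_def lincomb_uminus)
  qed
  ultimately show ?thesis
    by blast
qed

lemma dual_word_if_proj_notin:
  assumes "J \<subseteq> {..<n}" "proj ({..<n} - J) (lincomb G01 s) \<notin> proj ({..<n} - J) ` code_sum F1 E"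
  obtains u where "u \<in> dual n (code_sum F1 E)" "u \<notin> dual n (code_sum F0 E)" "\<forall>i\<in>J. u i = 0"
proof -
  let ?B = "{..<n} - J"
  obtain u where u: "u \<in> vecs ?B" "\<forall>a\<in>proj ?B ` code_sum F1 E \<inter> vecs ?B. (\<Sum>i\<in>?B. u i * a i) = 0"
    "(\<Sum>i\<in>?B. u i * proj ?B (lincomb G01 s) i) \<noteq> 0"
    using dual_vector_separates[OF _ subspace_proj_image[OF code_sum_F1_E_subspace] proj_in_vecs
        assms(2)]
    by auto
  have dot_u: "dot n u g = (\<Sum>i\<in>?B. u i * proj ?B g i)" for g
    using u(1) by (rule dot_eq_sum_proj) auto
  have "u \<in> vecs {..<n}"
    using u(1) vecs_mono[of ?B "{..<n}"] by auto
  then have "u \<in> dual n (code_sum F1 E)"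
    using u(2) by (auto simp: mem_dual_iff dot_u proj_in_vecs)
  moreover have "u \<notin> dual n (code_sum F0 E)"
    using u(3) subset_code_sum_E lincomb_G01_in_F0 by (auto simp: mem_dual_iff dot_u)
  moreover have "\<forall>i\<in>J. u i = 0"
    using u(1) by (auto simp: vecs_def)
  ultimately show ?thesis
    using that by blast
qed

lemma coset_meets_shares_if_no_dual_word:
  assumes "J \<subseteq> {..<n}"
    and "\<forall>u\<in>dual n (code_sum F1 E) - dual n (code_sum F0 E). \<exists>i\<in>J. u i \<noteq> 0"
  shows "\<exists>w\<in>coset s. w \<in> vecs (J \<union> {n..<n + e})"
proof (cases "proj ({..<n} - J) (lincomb G01 s) \<in> proj ({..<n} - J) ` code_sum F1 E")
  case True
  then show ?thesis
    by (rule coset_meets_shares_if_proj_in)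
next
  case False
  then obtain u where "u \<in> dual n (code_sum F1 E)" "u \<notin> dual n (code_sum F0 E)" "\<forall>i\<in>J. u i = 0"
    by (rule dual_word_if_proj_notin[OF assms(1)])
  then show ?thesis
    using assms(2) by blast
qed

definition logical_ops :: "(nat \<Rightarrow> 'a) set" where
  "logical_ops = (F0 - F1) \<union> (dual n (code_sum F1 E) - dual n (code_sum F0 E))"

lemma authorized_iff_logical_ops_meet:
  assumes "J \<subseteq> {..<n}"
  shows "ecss_authorized n G01 G1 GE (J \<union> {n..<n + e}) \<longleftrightarrow> (\<forall>v\<in>logical_ops. \<exists>i\<in>J. v i \<noteq> 0)"
proof
  assume "ecss_authorized n G01 G1 GE (J \<union> {n..<n + e})"
  then show "\<forall>v\<in>logical_ops. \<exists>i\<in>J. v i \<noteq> 0"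
    using not_authorized_if_F0_word_vanishes[OF assms] not_authorized_if_dual_word_vanishes[OF assms]
    by (auto simp: logical_ops_def)
next
  assume meet: "\<forall>v\<in>logical_ops. \<exists>i\<in>J. v i \<noteq> 0"
  have "ecss_decoder n G01 G1 GE F0 F1 J"
  proof (intro ecss_decoder.intro ecss_decoder_axioms.intro)
    show "ecss n G01 G1 GE F0 F1"
      by (intro ecss.intro F0_code F1_code F1_psubset_F0 G1_gen G0_gen GE_vecs F0_inter_E)
    show "c \<in> F1" if "c \<in> F0" "\<forall>i\<in>J. c i = 0" for c
      using meet that by (auto simp: logical_ops_def)
    show "\<exists>w\<in>coset s. w \<in> vecs (J \<union> {n..<n + e})" if "s \<in> secrets" for s
      using coset_meets_shares_if_no_dual_word[OF assms] meet by (auto simp: logical_ops_def)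
  qed (rule assms)
  then show "ecss_authorized n G01 G1 GE (J \<union> {n..<n + e})"
    by (rule ecss_decoder.decodable_authorized)
qed

text \<open>Min of an empty set is unspecified, so tau_e needs this; it is the only use of
  F0 \<inter> E = {0}.\<close>
lemma dual_logical_ops_nonempty: "dual n (code_sum F1 E) - dual n (code_sum F0 E) \<noteq> {}"
proof -
  obtain a where a: "a \<in> F0" "a \<notin> F1"
    using F1_psubset_F0 by blast
  have "a \<notin> code_sum F1 E"
  proof
    assume "a \<in> code_sum F1 E"
    then obtain g1 g2 where g: "g1 \<in> F1" "g2 \<in> E" "a = g1 + g2"
      by (auto simp: code_sum_def)
    then have "g2 \<in> F0"
      using a(1) F1_psubset_F0 vec.subspace_diff[OF F0_subspace, of a g1] by auto
    then have "g2 = 0"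
      using F0_inter_E g(2) by auto
    then show False
      using a(2) g by simp
  qed
  then obtain u where u: "u \<in> vecs {..<n}" "\<forall>g\<in>code_sum F1 E \<inter> vecs {..<n}. dot n u g = 0"
    "dot n u a \<noteq> 0"
    using dual_vector_separates[OF finite_lessThan code_sum_F1_E_subspace] a(1) F0_vecs
    unfolding dot_def by blast
  have "u \<in> dual n (code_sum F1 E)"
    using u(1,2) code_sum_F1_E_vecs by (auto simp: mem_dual_iff)
  moreover have "u \<notin> dual n (code_sum F0 E)"
    using u(3) subset_code_sum_E a(1) by (auto simp: mem_dual_iff)
  ultimately show ?thesis
    by blast
qed

lemma tau_e_eq: "tau_e n F0 F1 E = n + 1 - Min (hwt n ` logical_ops)"
proof -
  have "Min (hwt n ` logical_ops) = min (Min (hwt n ` (F0 - F1)))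
      (Min (hwt n ` (dual n (code_sum F1 E) - dual n (code_sum F0 E))))"
    unfolding logical_ops_def image_Un
    using F1_psubset_F0 dual_logical_ops_nonempty
    by (intro Min_Un[OF finite_hwt_image _ finite_hwt_image]) auto
  then show ?thesis
    by (simp add: tau_e_def wt_diff_def)
qed

end

theorem corollary1:
  fixes F0 F1 :: "(nat \<Rightarrow> 'a::{finite,field}) set"
    and G01 G1 GE :: "(nat \<Rightarrow> 'a) list"
    and n \<tau> :: nat
  assumes "linear_code n F0" and "linear_code n F1" and "F1 \<subset> F0"
    and "generator_matrix G1 F1"
    and "generator_matrix (G01 @ G1) F0"
    and "set GE \<subseteq> vecs {..<n}"
    and "F0 \<inter> row_space GE = {zerov}"
  shows "(\<forall>J. J \<subseteq> {..<n} \<and> card J = \<tau> \<longrightarrow>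
            ecss_authorized n G01 G1 GE (J \<union> {n..<n + length GE}))
         \<longleftrightarrow> \<tau> \<ge> tau_e n F0 F1 (row_space GE)"
proof -
  interpret ecss n G01 G1 GE F0 F1
    using assms by unfold_locales
  have "logical_ops \<noteq> {}"
    using F1_psubset_F0 by (auto simp: logical_ops_def)
  have "(\<forall>J. J \<subseteq> {..<n} \<and> card J = \<tau> \<longrightarrow> ecss_authorized n G01 G1 GE (J \<union> {n..<n + e}))
      \<longleftrightarrow> (\<forall>J. J \<subseteq> {..<n} \<and> card J = \<tau> \<longrightarrow> (\<forall>v\<in>logical_ops. \<exists>i\<in>J. v i \<noteq> 0))"
    by (simp add: authorized_iff_logical_ops_meet)
  also have "\<dots> \<longleftrightarrow> n + 1 - Min (hwt n ` logical_ops) \<le> \<tau>"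
    using \<open>logical_ops \<noteq> {}\<close> by (rule all_sets_meet_supports_iff)
  finally show ?thesis
    by (simp add: tau_e_eq)
qed

end
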